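(* Let $R$ be an integral domain and $\delta,\gamma,p,q\in R$. Let $a=\mathcal{W}(\delta,\gamma,p,q)$ and $u=\mathcal{W}(0,1,p,q)$. Then for every integer $k\ge1$, $$(a_{kn})_{n\ge0}=L^{(u_k,\,-qu_{k-1})}(a),$$ i.e. $a_{kn}=\sum_{i=0}^n\binom{n}{i}u_k^i(-qu_{k-1})^{n-i}a_i$ for all $n\ge0$.
   Context: $\mathcal{W}(\delta,\gamma,p,q)$ denotes the sequence $(a_n)_{n\ge0}$ with $a_0=\delta$, $a_1=\gamma$, $a_n=pa_{n-1}-qa_{n-2}$ for $n\ge2$. For $h,y\in R$, $L^{(h,y)}(a)$ is the sequence $b$ with $b_n=\sum_{i=0}^n\binom{n}{i}h^iy^{n-i}a_i$, with the convention $0^0=1$. *)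

theory Defs
  imports Main
begin

fun W :: "'a::comm_ring_1 \<Rightarrow> 'a \<Rightarrow> 'a \<Rightarrow> 'a \<Rightarrow> nat \<Rightarrow> 'a" where
  "W \<delta> \<gamma> p q 0 = \<delta>"
| "W \<delta> \<gamma> p q (Suc 0) = \<gamma>"
| "W \<delta> \<gamma> p q (Suc (Suc n)) = p * W \<delta> \<gamma> p q (Suc n) - q * W \<delta> \<gamma> p q n"

text \<open>Binomial transform L^(h,y)(a); note x^0 = 1 in Isabelle, so 0^0 = 1.\<close>
definition L :: "'a::comm_ring_1 \<Rightarrow> 'a \<Rightarrow> (nat \<Rightarrow> 'a) \<Rightarrow> nat \<Rightarrow> 'a" where
  "L h y a n = (\<Sum>i = 0..n. of_nat (n choose i) * h ^ i * y ^ (n - i) * a i)"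

end

theory Submission
  imports Defs
begin

text \<open>Shifting a Horadam sequence by \<open>m\<close> gives again a Horadam sequence, and every
  Horadam sequence is a linear combination of shifts of \<open>u = W 0 1 p q\<close>; together this is the
  addition formula \<open>a (m + k) = u k * a (m + 1) - q * u (k - 1) * a m\<close>.  For fixed \<open>k \<ge> 1\<close>
  it says \<open>E\<^sup>k = h E + y\<close> for the shift operator \<open>E\<close>, with \<open>h = u k\<close> and \<open>y = - q * u (k - 1)\<close>,
  so \<open>E\<^sup>k\<^sup>n = (h E + y)\<^sup>n\<close> expands by the binomial theorem into the transform \<open>L h y\<close>.\<close>

lemma W_shift: "W \<delta> \<gamma> p q (m + n) = W (W \<delta> \<gamma> p q m) (W \<delta> \<gamma> p q (Suc m)) p q n"
  by (induction n rule: induct_nat_012) simp_all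

lemma W_Suc_eq_combination:
  "W \<delta> \<gamma> p q (Suc n) = \<gamma> * W 0 1 p q (Suc n) - q * \<delta> * W 0 1 p q n"
proof (induction n rule: induct_nat_012)
  case (ge2 n)
  have "W \<delta> \<gamma> p q (Suc (Suc (Suc n))) = p * W \<delta> \<gamma> p q (Suc (Suc n)) - q * W \<delta> \<gamma> p q (Suc n)"
    by simp
  also have "\<dots> = \<gamma> * W 0 1 p q (Suc (Suc (Suc n))) - q * \<delta> * W 0 1 p q (Suc (Suc n))"
    by (simp only: ge2) (simp add: algebra_simps)
  finally show ?case .
qed simp_all

lemma W_add_Suc:
  "W \<delta> \<gamma> p q (m + Suc k) =
     W 0 1 p q (Suc k) * W \<delta> \<gamma> p q (Suc m) - q * W 0 1 p q k * W \<delta> \<gamma> p q m"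
  unfolding W_shift W_Suc_eq_combination[of "W \<delta> \<gamma> p q m"] by (simp add: algebra_simps)

text \<open>Proved by Pascal's rule for the binomial coefficients.\<close>
lemma L_Suc: "L h y a (Suc n) = h * L h y (\<lambda>i. a (Suc i)) n + y * L h y a n"
proof -
  have split: "L h y a (Suc n) =
      (\<Sum>i\<le>n. of_nat (n choose i) * h ^ Suc i * y ^ (n - i) * a (Suc i)) +
      (y ^ Suc n * a 0 + (\<Sum>i\<le>n. of_nat (n choose Suc i) * h ^ Suc i * y ^ (n - i) * a (Suc i)))"
    unfolding L_def atLeast0AtMost
    by (subst sum.atMost_Suc_shift) (simp add: sum.distrib algebra_simps)
  have shifted: "(\<Sum>i\<le>n. of_nat (n choose i) * h ^ Suc i * y ^ (n - i) * a (Suc i)) =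
      h * L h y (\<lambda>i. a (Suc i)) n"
    unfolding L_def atLeast0AtMost by (simp add: sum_distrib_left algebra_simps)
  have "y ^ Suc n * a 0 +
      (\<Sum>i\<le>n. of_nat (n choose Suc i) * h ^ Suc i * y ^ (n - i) * a (Suc i)) =
      (\<Sum>i\<le>Suc n. of_nat (n choose i) * h ^ i * y ^ (Suc n - i) * a i)"
    by (subst sum.atMost_Suc_shift) simp
  also have "\<dots> = (\<Sum>i\<le>n. of_nat (n choose i) * h ^ i * y ^ (Suc n - i) * a i)"
    by (simp add: binomial_eq_0)
  also have "\<dots> = y * L h y a n"
    unfolding L_def atLeast0AtMost sum_distrib_left
    by (rule sum.cong) (auto simp: Suc_diff_le algebra_simps)
  finally show ?thesis
    by (simp only: split shifted)
qed

lemma L_iterate_recurrence: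
  fixes a :: "nat \<Rightarrow> 'a::comm_ring_1"
  assumes step: "\<And>m. a (m + k) = h * a (Suc m) + y * a m"
  shows "a (m + k * n) = L h y (\<lambda>i. a (m + i)) n"
proof (induction n arbitrary: m)
  case 0
  show ?case by (simp add: L_def)
next
  case (Suc n)
  have "a (m + k * Suc n) = h * a (Suc m + k * n) + y * a (m + k * n)"
    using step[of "m + k * n"] by (simp add: algebra_simps)
  also have "\<dots> = L h y (\<lambda>i. a (m + i)) (Suc n)"
    using Suc.IH[of m] Suc.IH[of "Suc m"] by (simp add: L_Suc)
  finally show ?case .
qed

theorem theorem14:
  fixes \<delta> \<gamma> p q :: "'a::idom" and k :: nat
  assumes "k \<ge> 1"
  shows "(\<lambda>n. W \<delta> \<gamma> p q (k * n)) =
         L (W 0 1 p q k) (- q * W 0 1 p q (k - 1)) (W \<delta> \<gamma> p q)"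
proof
  fix n
  obtain j where k: "k = Suc j"
    using assms by (cases k) auto
  have "W \<delta> \<gamma> p q (m + k) =
      W 0 1 p q k * W \<delta> \<gamma> p q (Suc m) + (- q * W 0 1 p q (k - 1)) * W \<delta> \<gamma> p q m" for m
    using W_add_Suc[of \<delta> \<gamma> p q m j] by (simp add: k)
  from L_iterate_recurrence[OF this, of 0 n]
  show "W \<delta> \<gamma> p q (k * n) = L (W 0 1 p q k) (- q * W 0 1 p q (k - 1)) (W \<delta> \<gamma> p q) n"
    by simp
qed

end
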